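(* Let $M$ be a Spiky CRMDP with underlying MDP $\dot M = (\mathcal{S},\mathcal{A},T,R)$, and define the reward lower Lipschitz bound $\underline{R}(x) = \max_{y\in\mathcal{S}_n}\big(R(y) - d(x,y)\big)$ for $x\in\mathcal{S}$. Suppose there exists a policy $\pi^*$ that is optimal for $\dot M$ (i.e. with respect to the reward $R$) such that the trajectories $\tau\sim\pi^*$ it generates contain no corrupt states. Then every policy that is optimal with respect to the reward function $\underline{R}$ is also optimal for $\dot M$ (i.e. with respect to $R$).
   Context: A Corrupt Reward MDP (CRMDP) is a finite-state Markov decision process $(\mathcal{S}, \mathcal{A}, T, R)$ (the underlying MDP) with state set $\mathcal{S}$, action set $\mathcal{A}$, transition function $T$ and (true) reward function $R\colon \mathcal{S}\to\mathbb{R}$, together with an additional corrupt reward function $C\colon \mathcal{S} \to \mathbb{R}$. The set of non-corrupt states is $\mathcal{S}_n = \{x \in \mathcal{S} : R(x) = C(x)\}$ and the set of corrupt states is $\mathcal{S}_c = \mathcal{S}\setminus \mathcal{S}_n$. A Spiky CRMDP is a CRMDP together with a metric $d\colon \mathcal{S}\times\mathcal{S}\to[0,\infty)$ and a function $\mathrm{LV}\colon \mathcal{P}(\mathcal{S})\times\mathcal{S}\to[0,\infty)$, written $(A,x)\mapsto \mathrm{LV}_A(x)$, non-decreasing with respect to set inclusion in $A$, such that: (1) $\mathcal{S}_n$ is nonempty; (2) $|R(x)-R(y)|\le d(x,y)$ for all $x,y\in\mathcal{S}$; (3) for every $x\in\mathcal{S}_c$, $\mathrm{LV}_{\mathcal{S}_n}(x)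 > \sup_{y\in\mathcal{S}_n}\mathrm{LV}_{\mathcal{S}}(y)$. A policy $\pi$ generates random trajectories $\tau\sim\pi$, viewed as (finite) sequences of states; for a reward function $r\colon\mathcal{S}\to\mathbb{R}$, the value of $\pi$ is $\mathbb{E}_{\tau\sim\pi}\sum_{x\in\tau} r(x)$ (sum over the states of the trajectory, with multiplicity), assumed finite, and $\pi$ is optimal with respect to $r$ if it maximizes this value over all policies. *)

theory Defs
  imports "HOL-Probability.Probability"
begin

definition is_metric :: "('s \<Rightarrow> 's \<Rightarrow> real) \<Rightarrow> bool" where
  "is_metric d \<longleftrightarrow>
     (\<forall>x y. d x y \<ge> 0) \<and> (\<forall>x y. d x y = 0 \<longleftrightarrow> x = y) \<and>
     (\<forall>x y. d x y = d y x) \<and> (\<forall>x y z. d x z \<le> d x y + d y z)"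

definition noncorrupt :: "('s \<Rightarrow> real) \<Rightarrow> ('s \<Rightarrow> real) \<Rightarrow> 's set" where
  "noncorrupt R C = {x. R x = C x}"

definition corrupt :: "('s \<Rightarrow> real) \<Rightarrow> ('s \<Rightarrow> real) \<Rightarrow> 's set" where
  "corrupt R C = UNIV - noncorrupt R C"

definition spiky_crmdp ::
  "('s::finite \<Rightarrow> real) \<Rightarrow> ('s \<Rightarrow> real) \<Rightarrow> ('s \<Rightarrow> 's \<Rightarrow> real)
    \<Rightarrow> ('s set \<Rightarrow> 's \<Rightarrow> real) \<Rightarrow> bool" where
  "spiky_crmdp R C d LV \<longleftrightarrow>
     is_metric d \<and>
     (\<forall>A x. LV A x \<ge> 0) \<and>
     (\<forall>A B x. A \<subseteq> B \<longrightarrow> LV A x \<le> LV B x) \<and>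
     noncorrupt R C \<noteq> {} \<and>
     (\<forall>x y. \<bar>R x - R y\<bar> \<le> d x y) \<and>
     (\<forall>x \<in> corrupt R C.
        LV (noncorrupt R C) x > (SUP y\<in>noncorrupt R C. LV UNIV y))"

definition R_low :: "('s::finite \<Rightarrow> real) \<Rightarrow> ('s \<Rightarrow> real) \<Rightarrow> ('s \<Rightarrow> 's \<Rightarrow> real)
    \<Rightarrow> 's \<Rightarrow> real" where
  "R_low R C d x = Max ((\<lambda>y. R y - d x y) ` noncorrupt R C)"

definition policy_value :: "('p \<Rightarrow> 's list pmf) \<Rightarrow> ('s \<Rightarrow> real) \<Rightarrow> 'p \<Rightarrow> real" where
  "policy_value traj r \<pi> = measure_pmf.expectation (traj \<pi>) (\<lambda>\<tau>. sum_list (map r \<tau>))"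

definition optimal_policy :: "('p \<Rightarrow> 's list pmf) \<Rightarrow> ('s \<Rightarrow> real) \<Rightarrow> 'p \<Rightarrow> bool" where
  "optimal_policy traj r \<pi> \<longleftrightarrow> (\<forall>\<pi>'. policy_value traj r \<pi>' \<le> policy_value traj r \<pi>)"

end

theory Submission
  imports Defs
begin

text \<open>The Lipschitz bound makes \<open>R_low\<close> a pessimistic estimate: \<open>R_low \<le> R\<close> everywhere,
  with equality on the non-corrupt states. Hence every policy is valued no higher under
  \<open>R_low\<close> than under \<open>R\<close>, while \<open>\<pi>star\<close>, which never visits a corrupt state, has the same
  value under both. For an \<open>R_low\<close>-optimal \<open>\<pi>\<close> this gives
  \<open>V R \<pi>star = V R_low \<pi>star \<le> V R_low \<pi> \<le> V R \<pi>\<close>.\<close>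

lemma R_low_le:
  assumes "is_metric d" and "noncorrupt R C \<noteq> {}"
    and lipschitz: "\<And>x y. \<bar>R x - R y\<bar> \<le> d x y"
  shows "R_low R C d x \<le> R x"
proof -
  have "R y - d x y \<le> R x" for y
    using lipschitz[of y x] \<open>is_metric d\<close> unfolding is_metric_def by auto
  then show ?thesis
    unfolding R_low_def using \<open>noncorrupt R C \<noteq> {}\<close> by (subst Max_le_iff) auto
qed

lemma R_low_eq_noncorrupt:
  assumes "is_metric d" and lipschitz: "\<And>x y. \<bar>R x - R y\<bar> \<le> d x y"
    and x: "x \<in> noncorrupt R C"
  shows "R_low R C d x = R x"
proof -
  have "R x - d x x \<le> R_low R C d x"
    unfolding R_low_def using x by (intro Max_ge) auto
  moreover have "d x x = 0"
    using \<open>is_metric d\<close> unfolding is_metric_def by auto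
  ultimately show ?thesis
    using R_low_le[OF \<open>is_metric d\<close> _ lipschitz, of C x] x by force
qed

lemma policy_value_mono:
  assumes "\<And>x. r x \<le> r' x"
    and "integrable (measure_pmf (traj \<pi>)) (\<lambda>\<tau>. sum_list (map r \<tau>))"
    and "integrable (measure_pmf (traj \<pi>)) (\<lambda>\<tau>. sum_list (map r' \<tau>))"
  shows "policy_value traj r \<pi> \<le> policy_value traj r' \<pi>"
  unfolding policy_value_def
proof (rule integral_mono[OF assms(2,3)])
  show "sum_list (map r \<tau>) \<le> sum_list (map r' \<tau>)" for \<tau>
    by (induction \<tau>) (auto intro: add_mono assms(1))
qed

lemma policy_value_cong_visited:
  assumes "\<And>\<tau> x. \<tau> \<in> set_pmf (traj \<pi>) \<Longrightarrow> x \<in> set \<tau> \<Longrightarrow> r x = r' x"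
  shows "policy_value traj r \<pi> = policy_value traj r' \<pi>"
  unfolding policy_value_def
proof (rule integral_cong_AE)
  show "AE \<tau> in measure_pmf (traj \<pi>). sum_list (map r \<tau>) = sum_list (map r' \<tau>)"
    using assms by (intro AE_pmfI) (metis map_eq_conv)
qed auto

lemma optimal_policy_transfer:
  assumes under: "\<And>\<pi>. policy_value traj r' \<pi> \<le> policy_value traj r \<pi>"
    and opt_star: "optimal_policy traj r \<pi>star"
    and exact_star: "policy_value traj r' \<pi>star = policy_value traj r \<pi>star"
    and opt: "optimal_policy traj r' \<pi>"
  shows "optimal_policy traj r \<pi>"
  unfolding optimal_policy_def
proof
  fix \<pi>'
  have "policy_value traj r \<pi>' \<le> policy_value traj r \<pi>star"
    using opt_star unfolding optimal_policy_def by blast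
  also have "\<dots> = policy_value traj r' \<pi>star" by (rule exact_star[symmetric])
  also have "\<dots> \<le> policy_value traj r' \<pi>"
    using opt unfolding optimal_policy_def by blast
  also have "\<dots> \<le> policy_value traj r \<pi>" by (rule under)
  finally show "policy_value traj r \<pi>' \<le> policy_value traj r \<pi>" .
qed

theorem proposition3:
  fixes R C :: "'s::finite \<Rightarrow> real"
    and d :: "'s \<Rightarrow> 's \<Rightarrow> real"
    and LV :: "'s set \<Rightarrow> 's \<Rightarrow> real"
    and traj :: "'p \<Rightarrow> 's list pmf"
    and \<pi>star :: 'p
  assumes spiky: "spiky_crmdp R C d LV"
    and finite_value: "\<And>\<pi> (r :: 's \<Rightarrow> real).
          integrable (measure_pmf (traj \<pi>)) (\<lambda>\<tau>. sum_list (map r \<tau>))"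
    and opt_star: "optimal_policy traj R \<pi>star"
    and no_corrupt: "\<forall>\<tau> \<in> set_pmf (traj \<pi>star). set \<tau> \<inter> corrupt R C = {}"
  shows "\<forall>\<pi>. optimal_policy traj (R_low R C d) \<pi> \<longrightarrow> optimal_policy traj R \<pi>"
proof -
  have metric: "is_metric d" and nonempty: "noncorrupt R C \<noteq> {}"
    and lipschitz: "\<And>x y. \<bar>R x - R y\<bar> \<le> d x y"
    using spiky unfolding spiky_crmdp_def by auto
  have under: "policy_value traj (R_low R C d) \<pi> \<le> policy_value traj R \<pi>" for \<pi>
    by (intro policy_value_mono finite_value R_low_le[OF metric nonempty lipschitz])
  have "policy_value traj (R_low R C d) \<pi>star = policy_value traj R \<pi>star"
  proof (rule policy_value_cong_visited)
    fix \<tau> x assume "\<tau> \<in> set_pmf (traj \<pi>star)" "x \<in> set \<tau>"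
    then have "x \<in> noncorrupt R C"
      using no_corrupt unfolding corrupt_def by auto
    then show "R_low R C d x = R x" by (rule R_low_eq_noncorrupt[OF metric lipschitz])
  qed
  then show ?thesis
    using optimal_policy_transfer[OF under opt_star] by blast
qed

end
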